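(* Assume (FWW) for a flow $\Phi_t$ on $\mathbb{R}^n$ and a $k$-cone $C$. Let $K\subset\mathbb{R}^n$ be a compact invariant set and let $\mathbb{R}^n=E_y\oplus F_y$, $y\in K$, be a $k$-exponential separation of $(\Phi_t,D\Phi_t)$ along $K$ associated with $C$. For $y\in K$ let $P_y$ be the projection onto $E_y$ along $F_y$ and $Q_y=I-P_y$. Then: (i) the projections $P_y$ and $Q_y$ are bounded uniformly in $y\in K$; (ii) there exists a constant $C_1>0$ such that if $v\in\mathbb{R}^n\setminus\{0\}$ satisfies $\|P_y(v)\|\ge C_1\|Q_y(v)\|$ for some $y\in K$, then $v\in\operatorname{Int}C$; (iii) for any $v\in C\setminus\{0\}$ there exists a constant $\delta_3>0$ such that $\|Q_y(v)\|\le\delta_3\|P_y(v)\|$ for every $y\in K$.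
   Context: A closed set $C\subset\mathbb{R}^n$ is a $k$-cone if $lv\in C$ for all $v\in C$, $l\in\mathbb{R}$, and the maximal dimension of a linear subspace contained in $C$ is $k$. $C$ is $k$-solid if there is a $k$-dimensional subspace $W$ with $W\setminus\{0\}\subset\operatorname{Int}C$. Write $x\sim y$ if $x-y\in C$ and $x\approx y$ if $x-y\in\operatorname{Int}C$. A flow $\Phi_t$ is strongly monotone with respect to a $k$-solid cone $C$ if $x\sim y$ implies $\Phi_t(x)\sim\Phi_t(y)$ for $t\ge0$, and $x\ne y$, $x\sim y$ imply $\Phi_t(x)\approx\Phi_t(y)$ for $t>0$. Assumption (FWW): the flow $\Phi_t$ on $\mathbb{R}^n$ is $C^{1,\alpha}$-smooth ($C^1$ with locally $\alpha$-Hölder derivative, $\alpha\in(0,1]$), strongly monotone with respect to the $k$-cone $C$, and $D_x\Phi_t(C\setminus\{0\})\subset\operatorname{Int}C$ for $t>0$. A $k$-exponential separation along a compact invariant set $K$ associated with $C$ consists of continuous (in the Grassmannian gap metric) families of $k$-dimensional subspaces $E_x$ and $(n-k)$-dimensional subspaces $F_x$, $x\in K$, such that: $\mathbb{R}^n=E_x\oplus F_x$; $D_x\Phi_tE_x=E_{\Phi_t(x)}$, $D_x\Phi_tF_x\subset F_{\Phi_t(x)}$ for $t>0$; there are $M>0$, $0<\gamma<1$ with $\|D_x\Phi_tw\|\le M\gamma^t\|D_x\Phi_tv\|$ for all $x\in K$, unit $w\in F_x$, unit $v\in E_x$, $t\ge0$; and $E_x\subset\operatorname{Int}C\cup\{0\}$,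 $F_x\cap C=\{0\}$. *)

theory Defs
  imports "HOL-Analysis.Analysis"
begin

definition is_flow :: "(real \<Rightarrow> 'a::euclidean_space \<Rightarrow> 'a) \<Rightarrow> bool" where
  "is_flow \<Phi> \<longleftrightarrow> (\<forall>x. \<Phi> 0 x = x) \<and> (\<forall>s t x. \<Phi> (s + t) x = \<Phi> s (\<Phi> t x))
     \<and> continuous_on UNIV (\<lambda>(t, x). \<Phi> t x)"

definition flow_C1alpha ::
  "(real \<Rightarrow> 'a::euclidean_space \<Rightarrow> 'a) \<Rightarrow> (real \<Rightarrow> 'a \<Rightarrow> 'a \<Rightarrow> 'a) \<Rightarrow> real \<Rightarrow> bool" where
  "flow_C1alpha \<Phi> D\<Phi> \<alpha> \<longleftrightarrow> 0 < \<alpha> \<and> \<alpha> \<le> 1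
     \<and> (\<forall>t x. (\<Phi> t has_derivative D\<Phi> t x) (at x))
     \<and> (\<forall>t x. \<forall>\<epsilon>>0. \<exists>\<delta>>0. \<forall>y. dist y x < \<delta> \<longrightarrow> onorm (\<lambda>v. D\<Phi> t y v - D\<Phi> t x v) < \<epsilon>)
     \<and> (\<forall>t S. compact S \<longrightarrow> (\<exists>L. \<forall>x\<in>S. \<forall>y\<in>S.
           onorm (\<lambda>v. D\<Phi> t x v - D\<Phi> t y v) \<le> L * dist x y powr \<alpha>))"

definition k_cone :: "'a::euclidean_space set \<Rightarrow> nat \<Rightarrow> bool" where
  "k_cone C k \<longleftrightarrow> closed C \<and> (\<forall>v\<in>C. \<forall>l::real. l *\<^sub>R v \<in> C)
     \<and> (\<exists>W. subspace W \<and> W \<subseteq> C \<and> dim W = k)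
     \<and> (\<forall>W. subspace W \<and> W \<subseteq> C \<longrightarrow> dim W \<le> k)"

definition k_solid :: "'a::euclidean_space set \<Rightarrow> nat \<Rightarrow> bool" where
  "k_solid C k \<longleftrightarrow> (\<exists>W. subspace W \<and> dim W = k \<and> W - {0} \<subseteq> interior C)"

text \<open>x ~ y iff x - y in C; x \<approx> y iff x - y in Int C.\<close>

definition strongly_monotone :: "(real \<Rightarrow> 'a::euclidean_space \<Rightarrow> 'a) \<Rightarrow> 'a set \<Rightarrow> nat \<Rightarrow> bool" where
  "strongly_monotone \<Phi> C k \<longleftrightarrow> k_cone C k \<and> k_solid C k
     \<and> (\<forall>x y t. x - y \<in> C \<and> t \<ge> 0 \<longrightarrow> \<Phi> t x - \<Phi> t y \<in> C)
     \<and> (\<forall>x y t. x \<noteq> y \<and> x - y \<in> C \<and> t > 0 \<longrightarrow> \<Phi> t x - \<Phi> t y \<in> interior C)"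

definition FWW ::
  "(real \<Rightarrow> 'a::euclidean_space \<Rightarrow> 'a) \<Rightarrow> (real \<Rightarrow> 'a \<Rightarrow> 'a \<Rightarrow> 'a) \<Rightarrow> real \<Rightarrow> 'a set \<Rightarrow> nat \<Rightarrow> bool" where
  "FWW \<Phi> D\<Phi> \<alpha> C k \<longleftrightarrow> is_flow \<Phi> \<and> flow_C1alpha \<Phi> D\<Phi> \<alpha> \<and> strongly_monotone \<Phi> C k
     \<and> (\<forall>t x. t > 0 \<longrightarrow> D\<Phi> t x ` (C - {0}) \<subseteq> interior C)"

definition subspace_gap :: "'a::euclidean_space set \<Rightarrow> 'a set \<Rightarrow> real" where
  "subspace_gap V W = max (SUP v\<in>{v\<in>V. norm v = 1}. infdist v W)
                          (SUP w\<in>{w\<in>W. norm w = 1}. infdist w V)"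

definition gap_continuous_on :: "'a::euclidean_space set \<Rightarrow> ('a \<Rightarrow> 'b::euclidean_space set) \<Rightarrow> bool" where
  "gap_continuous_on K E \<longleftrightarrow> (\<forall>x\<in>K. \<forall>\<epsilon>>0. \<exists>\<delta>>0. \<forall>y\<in>K. dist y x < \<delta> \<longrightarrow> subspace_gap (E y) (E x) < \<epsilon>)"

definition invariant_set :: "(real \<Rightarrow> 'a \<Rightarrow> 'a) \<Rightarrow> 'a set \<Rightarrow> bool" where
  "invariant_set \<Phi> K \<longleftrightarrow> (\<forall>t. \<Phi> t ` K = K)"

definition k_exponential_separation ::
  "(real \<Rightarrow> 'a::euclidean_space \<Rightarrow> 'a) \<Rightarrow> (real \<Rightarrow> 'a \<Rightarrow> 'a \<Rightarrow> 'a) \<Rightarrow> 'a set \<Rightarrow> 'a set \<Rightarrow> nat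
     \<Rightarrow> ('a \<Rightarrow> 'a set) \<Rightarrow> ('a \<Rightarrow> 'a set) \<Rightarrow> bool" where
  "k_exponential_separation \<Phi> D\<Phi> K C k E F \<longleftrightarrow>
     (\<forall>x\<in>K. subspace (E x) \<and> dim (E x) = k \<and> subspace (F x) \<and> dim (F x) = DIM('a) - k
        \<and> E x \<inter> F x = {0} \<and> {e + f | e f. e \<in> E x \<and> f \<in> F x} = UNIV)
     \<and> gap_continuous_on K E \<and> gap_continuous_on K F
     \<and> (\<forall>x\<in>K. \<forall>t>0. D\<Phi> t x ` E x = E (\<Phi> t x) \<and> D\<Phi> t x ` F x \<subseteq> F (\<Phi> t x))
     \<and> (\<exists>M>0. \<exists>\<gamma>. 0 < \<gamma> \<and> \<gamma> < 1 \<and>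
          (\<forall>x\<in>K. \<forall>w\<in>F x. \<forall>v\<in>E x. \<forall>t\<ge>0. norm w = 1 \<longrightarrow> norm v = 1 \<longrightarrow>
              norm (D\<Phi> t x w) \<le> M * \<gamma> powr t * norm (D\<Phi> t x v)))
     \<and> (\<forall>x\<in>K. E x \<subseteq> interior C \<union> {0} \<and> F x \<inter> C = {0})"

definition proj_along :: "'a::real_vector set \<Rightarrow> 'a set \<Rightarrow> 'a \<Rightarrow> 'a" where
  "proj_along E F v = (THE e. e \<in> E \<and> v - e \<in> F)"

end

theory Submission
  imports Defs
begin

(* Only the splitting matters, not the dynamics. Gap continuity of y \<mapsto> E y and y \<mapsto> F y
  makes their graphs closed, so over the compact set K the bundle of unit vectors of the E y is
  compact. Three compactness arguments give the three claims: this bundle has positive distance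
  from the graph of F, which bounds the angle between E y and F y from below and hence the
  projections from above; it lies a uniform distance inside the open set interior C, so every
  vector close to the direction of some E y lies in the cone; and for v \<in> C - {0}, which lies
  in no F y, the compact set K \<times> {v} has positive distance from the graph of F, which bounds
  the norm of P y v from below. *)

lemma proj_along_eq:
  fixes E F :: "'a::real_vector set"
  assumes "subspace E" "subspace F" "E \<inter> F = {0}" "e \<in> E" "f \<in> F"
  shows "proj_along E F (e + f) = e"
  unfolding proj_along_def
proof (rule the_equality)
  show "e \<in> E \<and> e + f - e \<in> F" using assms(4,5) by simp
  fix e' assume e': "e' \<in> E \<and> e + f - e' \<in> F"
  have diff: "e' - e = f - (e + f - e')" by (simp add: algebra_simps)
  have "e' - e \<in> E" using e' assms(1,4) by (simp add: subspace_diff)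
  moreover have "e' - e \<in> F" unfolding diff using subspace_diff[OF assms(2,5)] e' by blast
  ultimately have "e' - e \<in> E \<inter> F" by blast
  then show "e' = e" using assms(3) by simp
qed

lemma proj_along_mem:
  fixes E F :: "'a::real_vector set"
  assumes "subspace E" "subspace F" "E \<inter> F = {0}" "{e + f | e f. e \<in> E \<and> f \<in> F} = UNIV"
  shows "proj_along E F v \<in> E" "v - proj_along E F v \<in> F"
proof -
  obtain e f where "e \<in> E" "f \<in> F" "v = e + f" using assms(4) by blast
  then show "proj_along E F v \<in> E" "v - proj_along E F v \<in> F"
    using proj_along_eq[OF assms(1-3)] by simp_all
qed

lemma scaleR_mem_interior:
  fixes S :: "'a::real_normed_vector set"
  assumes "(*\<^sub>R) c ` S \<subseteq> S" "c \<noteq> 0" "x \<in> interior S"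
  shows "c *\<^sub>R x \<in> interior S"
proof -
  have "(*\<^sub>R) c ` interior S \<subseteq> interior S"
    using assms(1,2) interior_subset by (intro interior_maximal) (auto simp: open_scaling)
  then show ?thesis using assms(3) by blast
qed

lemma infdist_scaleR_le:
  fixes W :: "'a::euclidean_space set"
  assumes "subspace W"
  shows "infdist (c *\<^sub>R x) W \<le> \<bar>c\<bar> * infdist x W"
proof -
  obtain s where s: "s \<in> W" "infdist x W = dist x s"
    using infdist_attains_inf[of W x] assms closed_subspace subspace_0 by blast
  have "infdist (c *\<^sub>R x) W \<le> dist (c *\<^sub>R x) (c *\<^sub>R s)"
    using assms s(1) by (intro infdist_le) (simp add: subspace_scale)
  also have "\<dots> = \<bar>c\<bar> * infdist x W"
    using s(2) by (simp add: dist_norm flip: scaleR_diff_right)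
  finally show ?thesis .
qed

lemma infdist_le_norm_mult_subspace_gap:
  fixes V W :: "'a::euclidean_space set"
  assumes "subspace V" "subspace W" "v \<in> V"
  shows "infdist v W \<le> norm v * subspace_gap V W"
proof (cases "v = 0")
  case True
  then show ?thesis using assms(2) by (simp add: subspace_0)
next
  case False
  define u where "u = v /\<^sub>R norm v"
  have u: "u \<in> V" "norm u = 1" using assms(1,3) False by (simp_all add: u_def subspace_scale)
  have "bdd_above ((\<lambda>u. infdist u W) ` {u \<in> V. norm u = 1})"
  proof (rule bdd_aboveI)
    fix d assume "d \<in> (\<lambda>u. infdist u W) ` {u \<in> V. norm u = 1}"
    then obtain x where "norm x = 1" "d = infdist x W" by blast
    then show "d \<le> 1" using infdist_le[OF subspace_0[OF assms(2)], of x] by simp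
  qed
  then have "infdist u W \<le> (SUP u\<in>{u \<in> V. norm u = 1}. infdist u W)"
    using u by (intro cSUP_upper) auto
  then have "infdist u W \<le> subspace_gap V W" unfolding subspace_gap_def by linarith
  moreover have "infdist v W \<le> norm v * infdist u W"
    using infdist_scaleR_le[OF assms(2), of "norm v" u] False by (simp add: u_def)
  ultimately show ?thesis by (meson mult_left_mono norm_ge_zero order_trans)
qed

lemma gap_continuous_on_imp_closed_Sigma:
  fixes G :: "'a::euclidean_space \<Rightarrow> 'b::euclidean_space set"
  assumes "closed K" "gap_continuous_on K G" "\<And>x. x \<in> K \<Longrightarrow> subspace (G x)"
  shows "closed (Sigma K G)"
  unfolding closed_sequential_limits
proof (intro allI impI, elim conjE)
  fix s and l :: "'a \<times> 'b"
  assume s: "\<forall>n. s n \<in> Sigma K G" and lim: "s \<longlonglongrightarrow> l"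
  obtain y w where l: "l = (y, w)" by fastforce
  have ys: "(\<lambda>n. fst (s n)) \<longlonglongrightarrow> y" and ws: "(\<lambda>n. snd (s n)) \<longlonglongrightarrow> w"
    using tendsto_fst[OF lim] tendsto_snd[OF lim] l by simp_all
  have sK: "fst (s n) \<in> K" for n using s by (metis SigmaD1 prod.collapse)
  have sG: "snd (s n) \<in> G (fst (s n))" for n using s by (metis SigmaD2 prod.collapse)
  have y: "y \<in> K"
    using closed_sequentially[OF assms(1) _ ys] sK by blast
  have Gy: "subspace (G y)" using assms(3) y .
  obtain M where M: "M > 0" "\<And>n. norm (snd (s n)) \<le> M"
    using BseqE[OF convergent_imp_Bseq[OF convergentI[OF ws]]] by blast
  have bound: "infdist w (G y) \<le> M * e" if "e > 0" for e
  proof (rule tendsto_upperbound[OF tendsto_infdist[OF ws]])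
    obtain \<delta> where \<delta>: "\<delta> > 0" "\<And>z. z \<in> K \<Longrightarrow> dist z y < \<delta> \<Longrightarrow> subspace_gap (G z) (G y) < e"
      using assms(2) y \<open>e > 0\<close> unfolding gap_continuous_on_def by blast
    have close: "infdist (snd (s n)) (G y) \<le> M * e" if "dist (fst (s n)) y < \<delta>" for n
    proof -
      have "infdist (snd (s n)) (G y) \<le> norm (snd (s n)) * subspace_gap (G (fst (s n))) (G y)"
        by (rule infdist_le_norm_mult_subspace_gap[OF assms(3)[OF sK] Gy sG])
      also have "\<dots> \<le> norm (snd (s n)) * e"
        using \<delta>(2)[OF sK that] by (intro mult_left_mono) simp_all
      also have "\<dots> \<le> M * e"
        using M(2)[of n] \<open>e > 0\<close> by (intro mult_right_mono) simp_all
      finally show ?thesis .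
    qed
    show "\<forall>\<^sub>F n in sequentially. infdist (snd (s n)) (G y) \<le> M * e"
      by (rule eventually_mono[OF tendstoD[OF ys \<delta>(1)] close])
  qed simp
  have "infdist w (G y) \<le> 0 + d" if "d > 0" for d
    using bound[of "d / M"] that M(1) by simp
  then have "infdist w (G y) \<le> 0"
    by (rule field_le_epsilon)
  then have "infdist w (G y) = 0" by (simp add: antisym infdist_nonneg)
  then have "w \<in> G y"
    using in_closed_iff_infdist_zero[OF closed_subspace[OF Gy]] subspace_0[OF Gy] by auto
  then show "l \<in> Sigma K G" using y l by simp
qed

locale continuous_splitting =
  fixes K :: "'a::euclidean_space set" and E F :: "'a \<Rightarrow> 'a set"
  assumes compact_K: "compact K"
    and subspace_E: "y \<in> K \<Longrightarrow> subspace (E y)"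
    and subspace_F: "y \<in> K \<Longrightarrow> subspace (F y)"
    and E_Int_F: "y \<in> K \<Longrightarrow> E y \<inter> F y = {0}"
    and E_plus_F: "y \<in> K \<Longrightarrow> {e + f | e f. e \<in> E y \<and> f \<in> F y} = UNIV"
    and gap_continuous_E: "gap_continuous_on K E"
    and gap_continuous_F: "gap_continuous_on K F"
begin

abbreviation proj :: "'a \<Rightarrow> 'a \<Rightarrow> 'a" where
  "proj y \<equiv> proj_along (E y) (F y)"

lemma proj_mem_E: "y \<in> K \<Longrightarrow> proj y v \<in> E y"
  and diff_proj_mem_F: "y \<in> K \<Longrightarrow> v - proj y v \<in> F y"
  using proj_along_mem[OF subspace_E subspace_F E_Int_F E_plus_F] by blast+

lemma closed_Sigma_E: "closed (Sigma K E)"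
  and closed_Sigma_F: "closed (Sigma K F)"
  using compact_imp_closed[OF compact_K] subspace_E subspace_F
  by (auto intro!: gap_continuous_on_imp_closed_Sigma gap_continuous_E gap_continuous_F)

lemma compact_Sigma_E_sphere: "compact (SIGMA y:K. E y \<inter> sphere 0 1)"
proof -
  have "(SIGMA y:K. E y \<inter> sphere 0 1) = Sigma K E \<inter> K \<times> sphere 0 1" by auto
  then show ?thesis
    using closed_Sigma_E compact_K by (simp add: closed_Int_compact compact_Times)
qed

lemma splitting_angle_bound:
  obtains c where "c > 0"
    "\<And>y e f. y \<in> K \<Longrightarrow> e \<in> E y \<Longrightarrow> f \<in> F y \<Longrightarrow> c * norm e \<le> norm (e + f)"
proof -
  have "(SIGMA y:K. E y \<inter> sphere 0 1) \<inter> Sigma K F = {}"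
  proof (intro equals0I)
    fix p assume "p \<in> (SIGMA y:K. E y \<inter> sphere 0 1) \<inter> Sigma K F"
    then obtain y u where "y \<in> K" "u \<in> E y \<inter> F y" "norm u = 1" by auto
    then show False using E_Int_F by auto
  qed
  then obtain c where c: "c > 0"
    "\<And>p q. p \<in> (SIGMA y:K. E y \<inter> sphere 0 1) \<Longrightarrow> q \<in> Sigma K F \<Longrightarrow> c \<le> dist p q"
    using separate_compact_closed[OF compact_Sigma_E_sphere closed_Sigma_F] by blast
  have "c * norm e \<le> norm (e + f)" if y: "y \<in> K" and ef: "e \<in> E y" "f \<in> F y" for y e f
  proof (cases "e = 0")
    case True
    then show ?thesis by simp
  next
    case False
    have "(y, e /\<^sub>R norm e) \<in> (SIGMA y:K. E y \<inter> sphere 0 1)"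
      using y ef(1) False subspace_E by (simp add: subspace_scale)
    moreover have "(y, - f /\<^sub>R norm e) \<in> Sigma K F"
      using y ef(2) subspace_F by (simp add: subspace_scale subspace_neg)
    ultimately have "c \<le> dist (y, e /\<^sub>R norm e) (y, - f /\<^sub>R norm e)" by (rule c(2))
    also have "\<dots> = norm (e + f) / norm e"
      by (simp add: dist_Pair_Pair dist_norm divide_inverse_commute flip: scaleR_add_right)
    finally show ?thesis using False by (simp add: field_simps)
  qed
  with c(1) that show thesis by blast
qed

lemma proj_bounded:
  "\<exists>B>0. \<forall>y\<in>K. \<forall>v. norm (proj y v) \<le> B * norm v \<and> norm (v - proj y v) \<le> B * norm v"
proof -
  obtain c where c: "c > 0"
    "\<And>y e f. y \<in> K \<Longrightarrow> e \<in> E y \<Longrightarrow> f \<in> F y \<Longrightarrow> c * norm e \<le> norm (e + f)"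
    using splitting_angle_bound by blast
  define B where "B = 1 / c + 1"
  have P: "norm (proj y v) \<le> 1 / c * norm v" if "y \<in> K" for y v
  proof -
    have "c * norm (proj y v) \<le> norm (proj y v + (v - proj y v))"
      by (rule c(2)[OF that proj_mem_E[OF that] diff_proj_mem_F[OF that]])
    then show ?thesis using c(1) by (simp add: field_simps)
  qed
  have "norm (proj y v) \<le> B * norm v" if "y \<in> K" for y v
    using P[OF that, of v] norm_ge_zero[of v] unfolding B_def distrib_right by linarith
  moreover have "norm (v - proj y v) \<le> B * norm v" if "y \<in> K" for y v
    using P[OF that, of v] norm_triangle_ineq4[of v "proj y v"]
    unfolding B_def distrib_right by linarith
  moreover have "B > 0" using c(1) by (simp add: B_def add_pos_pos)
  ultimately show ?thesis by blast
qed

lemma proj_dominant_imp_interior: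
  assumes E_interior: "\<And>y. y \<in> K \<Longrightarrow> E y - {0} \<subseteq> interior C"
    and cone: "\<And>c. c > 0 \<Longrightarrow> (*\<^sub>R) c ` C \<subseteq> C"
  shows "\<exists>C1>0. \<forall>v y. v \<noteq> 0 \<and> y \<in> K \<and> C1 * norm (v - proj y v) \<le> norm (proj y v)
    \<longrightarrow> v \<in> interior C"
proof -
  let ?S = "snd ` (SIGMA y:K. E y \<inter> sphere 0 1)"
  have "compact ?S"
    using compact_Sigma_E_sphere by (intro compact_continuous_image continuous_on_snd continuous_on_id)
  moreover have "?S \<subseteq> \<Union>{interior C}"
  proof
    fix u assume "u \<in> ?S"
    then obtain y where "y \<in> K" "u \<in> E y" "norm u = 1" by auto
    then show "u \<in> \<Union>{interior C}" using E_interior by fastforce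
  qed
  ultimately obtain \<epsilon> where \<epsilon>: "\<epsilon> > 0" "\<And>u. u \<in> ?S \<Longrightarrow> ball u \<epsilon> \<subseteq> interior C"
    using Heine_Borel_lemma[of ?S "{interior C}"] by auto
  have "v \<in> interior C"
    if v: "v \<noteq> 0" "y \<in> K" and dominant: "2 / \<epsilon> * norm (v - proj y v) \<le> norm (proj y v)" for v y
  proof -
    define p where "p = norm (proj y v)"
    have "p \<noteq> 0"
    proof
      assume "p = 0"
      then have "2 / \<epsilon> * norm (v - proj y v) \<le> 0" using dominant p_def by linarith
      then have "norm (v - proj y v) \<le> 0" using \<epsilon>(1) by (simp add: divide_le_0_iff)
      then have "v - proj y v = 0" by simp
      with \<open>p = 0\<close> v(1) show False by (simp add: p_def)
    qed
    then have "p > 0" by (simp add: p_def)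
    have "proj y v /\<^sub>R p \<in> E y \<inter> sphere 0 1"
      using proj_mem_E[OF v(2)] subspace_E[OF v(2)] \<open>p \<noteq> 0\<close> by (simp add: subspace_scale p_def)
    then have u: "proj y v /\<^sub>R p \<in> ?S" by (rule rev_image_eqI[OF SigmaI[OF v(2)]]) simp
    have "dist (proj y v /\<^sub>R p) (v /\<^sub>R p) < \<epsilon>"
    proof -
      have "dist (proj y v /\<^sub>R p) (v /\<^sub>R p) = norm (v - proj y v) / p"
        using \<open>p > 0\<close> by (simp add: dist_norm norm_minus_commute divide_inverse_commute
            flip: scaleR_diff_right)
      also have "\<dots> \<le> \<epsilon> / 2" using dominant \<open>p > 0\<close> \<epsilon>(1) by (simp add: p_def field_simps)
      finally show ?thesis using \<epsilon>(1) by linarith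
    qed
    then have "v /\<^sub>R p \<in> interior C" using \<epsilon>(2)[OF u] by (auto simp: subset_iff)
    from scaleR_mem_interior[OF cone[OF \<open>p > 0\<close>] _ this] \<open>p > 0\<close>
    show ?thesis by simp
  qed
  with \<epsilon>(1) show ?thesis by (intro exI[of _ "2 / \<epsilon>"]) auto
qed

lemma proj_bounded_below:
  assumes "\<And>y. y \<in> K \<Longrightarrow> v \<notin> F y"
  obtains c where "c > 0" "\<And>y. y \<in> K \<Longrightarrow> c \<le> norm (proj y v)"
proof -
  have disjoint: "K \<times> {v} \<inter> Sigma K F = {}"
  proof (intro equals0I)
    fix p assume p: "p \<in> K \<times> {v} \<inter> Sigma K F"
    obtain y w where "p = (y, w)" by fastforce
    with p have "y \<in> K" "v \<in> F y" by auto
    with assms show False by simp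
  qed
  obtain c where "c > 0" and c: "\<forall>p\<in>K \<times> {v}. \<forall>q\<in>Sigma K F. c \<le> dist p q"
    using separate_compact_closed[OF compact_Times[OF compact_K compact_sing] closed_Sigma_F disjoint]
    by blast
  have "c \<le> norm (proj y v)" if "y \<in> K" for y
  proof -
    have "(y, v) \<in> K \<times> {v}" "(y, v - proj y v) \<in> Sigma K F"
      using that diff_proj_mem_F[OF that] by simp_all
    with c have "c \<le> dist (y, v) (y, v - proj y v)" by blast
    then show ?thesis by (simp add: dist_Pair_Pair dist_norm)
  qed
  with \<open>c > 0\<close> that show thesis by blast
qed

lemma diff_proj_le_mult_proj:
  assumes "\<And>y. y \<in> K \<Longrightarrow> v \<notin> F y"
  shows "\<exists>\<delta>>0. \<forall>y\<in>K. norm (v - proj y v) \<le> \<delta> * norm (proj y v)"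
proof -
  obtain B where B: "B > 0" "\<And>y. y \<in> K \<Longrightarrow> norm (v - proj y v) \<le> B * norm v"
    using proj_bounded by blast
  obtain c where c: "c > 0" "\<And>y. y \<in> K \<Longrightarrow> c \<le> norm (proj y v)"
    using proj_bounded_below[OF assms] by blast
  define \<delta> where "\<delta> = (B * norm v + 1) / c"
  have "norm (v - proj y v) \<le> \<delta> * norm (proj y v)" if "y \<in> K" for y
  proof -
    have "norm (v - proj y v) \<le> B * norm v + 1" using B(2)[OF that] by linarith
    also have "\<dots> = (B * norm v + 1) / c * c" using c(1) by simp
    also have "\<dots> \<le> \<delta> * norm (proj y v)"
      unfolding \<delta>_def using B(1) c that by (intro mult_left_mono) simp_all
    finally show ?thesis .
  qed
  moreover have "\<delta> > 0" using B(1) c(1) by (simp add: \<delta>_def add_nonneg_pos)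
  ultimately show ?thesis by blast
qed

end

lemma continuous_splitting_if_k_exponential_separation:
  assumes "compact K" "k_exponential_separation \<Phi> D\<Phi> K C k E F"
  shows "continuous_splitting K E F"
  using assms unfolding k_exponential_separation_def continuous_splitting_def by auto

theorem lemma3p5:
  fixes \<Phi> :: "real \<Rightarrow> 'a::euclidean_space \<Rightarrow> 'a"
    and D\<Phi> :: "real \<Rightarrow> 'a \<Rightarrow> 'a \<Rightarrow> 'a"
    and \<alpha> :: real and C K :: "'a set" and k :: nat
    and E F :: "'a \<Rightarrow> 'a set" and P Q :: "'a \<Rightarrow> 'a \<Rightarrow> 'a"
  assumes "FWW \<Phi> D\<Phi> \<alpha> C k"
    and "compact K" and "invariant_set \<Phi> K"
    and "k_exponential_separation \<Phi> D\<Phi> K C k E F"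
    and "\<And>y. P y = proj_along (E y) (F y)"
    and "\<And>y v. Q y v = v - P y v"
  shows "(\<exists>B. \<forall>y\<in>K. \<forall>v. norm (P y v) \<le> B * norm v \<and> norm (Q y v) \<le> B * norm v)
    \<and> (\<exists>C1>0. \<forall>v y. v \<noteq> 0 \<and> y \<in> K \<and> norm (P y v) \<ge> C1 * norm (Q y v) \<longrightarrow> v \<in> interior C)
    \<and> (\<forall>v\<in>C - {0}. \<exists>\<delta>3>0. \<forall>y\<in>K. norm (Q y v) \<le> \<delta>3 * norm (P y v))"
proof -
  interpret continuous_splitting K E F
    using assms(2,4) by (rule continuous_splitting_if_k_exponential_separation)
  have cones: "E y - {0} \<subseteq> interior C" "F y \<inter> C = {0}" if "y \<in> K" for y
    using assms(4) that unfolding k_exponential_separation_def by blast+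
  have "\<forall>v\<in>C. \<forall>l::real. l *\<^sub>R v \<in> C"
    using assms(1) unfolding FWW_def strongly_monotone_def k_cone_def by blast
  then have scaling: "(*\<^sub>R) c ` C \<subseteq> C" for c by blast
  have PQ: "P y v = proj y v" "Q y v = v - proj y v" for y v by (simp_all add: assms(5,6))
  have "\<exists>B. \<forall>y\<in>K. \<forall>v. norm (P y v) \<le> B * norm v \<and> norm (Q y v) \<le> B * norm v"
    using proj_bounded unfolding PQ by blast
  moreover have "\<exists>C1>0. \<forall>v y. v \<noteq> 0 \<and> y \<in> K \<and> norm (P y v) \<ge> C1 * norm (Q y v)
      \<longrightarrow> v \<in> interior C"
    using proj_dominant_imp_interior[OF cones(1) scaling] unfolding PQ .
  moreover have "\<exists>\<delta>3>0. \<forall>y\<in>K. norm (Q y v) \<le> \<delta>3 * norm (P y v)" if "v \<in> C - {0}" for v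
    using diff_proj_le_mult_proj[of v] cones(2) that unfolding PQ by blast
  ultimately show ?thesis by blast
qed

end
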